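(* Let $\mathbb{X}$ be a reflexive Kadets-Klee real Banach space and $\mathbb{Y}$ any real Banach space (both of dimension greater than $1$). Let $T\in\mathbb{K}(\mathbb{X},\mathbb{Y})$ with $\|T\|=1$ and let $\epsilon>0$. Then $T$ is a uniform $\epsilon$-BPB approximation of itself. In particular, if $\mathbb{X}$ and $\mathbb{Y}$ are finite-dimensional, then every $T\in\mathbb{L}(\mathbb{X},\mathbb{Y})$ with $\|T\|=1$ has a uniform $\epsilon$-BPB approximation for every $\epsilon>0$.
   Context: $\mathbb{K}(\mathbb{X},\mathbb{Y})$ (resp. $\mathbb{L}(\mathbb{X},\mathbb{Y})$) denotes the compact (resp. bounded) linear operators with the operator norm; $S_{\mathbb{X}}$ is the unit sphere. $\mathbb{X}$ is Kadets-Klee if $x_n\to x$ weakly and $\|x_n\|\to\|x\|$ imply $\|x_n-x\|\to0$. For $T\in\mathbb{L}(\mathbb{X},\mathbb{Y})$ with $\|T\|=1$ and fixed $\epsilon>0$, an operator $A\in\mathbb{L}(\mathbb{X},\mathbb{Y})$ with $\|A\|=1$ is a uniform $\epsilon$-BPB approximation of $T$ if there exists $\delta(\epsilon)>0$ such that whenever $x_0\in S_{\mathbb{X}}$ satisfies $\|Tx_0\|>1-\delta(\epsilon)$, there exists $u_0\in S_{\mathbb{X}}$ with $\|Au_0\|=1$, $\|u_0-x_0\|<\epsilon$ and $\|A-T\|<\epsilon$. *)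

theory Defs
  imports "HOL-Analysis.Analysis"
begin

definition compact_operator :: "('a::real_normed_vector \<Rightarrow>\<^sub>L ('b::real_normed_vector)) \<Rightarrow> bool" where
  "compact_operator T \<longleftrightarrow> compact (closure (blinfun_apply T ` cball 0 1))"

definition weakly_converges :: "(nat \<Rightarrow> 'a::real_normed_vector) \<Rightarrow> 'a \<Rightarrow> bool" where
  "weakly_converges xs x \<longleftrightarrow>
     (\<forall>f :: 'a \<Rightarrow>\<^sub>L real. (\<lambda>n. blinfun_apply f (xs n)) \<longlonglongrightarrow> blinfun_apply f x)"

definition reflexive_space :: "'a::real_normed_vector itself \<Rightarrow> bool" where
  "reflexive_space _ \<longleftrightarrow>
     (\<forall>\<phi> :: ('a \<Rightarrow>\<^sub>L real) \<Rightarrow>\<^sub>L real. \<exists>x :: 'a. \<forall>f. blinfun_apply \<phi> f = blinfun_apply f x)"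

definition kadets_klee :: "'a::real_normed_vector itself \<Rightarrow> bool" where
  "kadets_klee _ \<longleftrightarrow>
     (\<forall>(xs :: nat \<Rightarrow> 'a) x. weakly_converges xs x \<and> (\<lambda>n. norm (xs n)) \<longlonglongrightarrow> norm x
        \<longrightarrow> (\<lambda>n. norm (xs n - x)) \<longlonglongrightarrow> 0)"

definition dim_gt_one :: "'a::real_vector itself \<Rightarrow> bool" where
  "dim_gt_one _ \<longleftrightarrow> (\<exists>x y :: 'a. x \<noteq> y \<and> independent {x, y})"

definition finite_dim_space :: "'a::real_vector itself \<Rightarrow> bool" where
  "finite_dim_space _ \<longleftrightarrow> (\<exists>B :: 'a set. finite B \<and> span B = UNIV)"

definition uniform_BPB_approx ::
  "('a::real_normed_vector \<Rightarrow>\<^sub>L ('b::real_normed_vector)) \<Rightarrow> ('a \<Rightarrow>\<^sub>L 'b) \<Rightarrow> real \<Rightarrow> bool" where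
  "uniform_BPB_approx A T \<epsilon> \<longleftrightarrow> norm A = 1 \<and>
     (\<exists>\<delta>>0. \<forall>x0. norm x0 = 1 \<and> norm (blinfun_apply T x0) > 1 - \<delta> \<longrightarrow>
        (\<exists>u0. norm u0 = 1 \<and> norm (blinfun_apply A u0) = 1 \<and> norm (u0 - x0) < \<epsilon> \<and> norm (A - T) < \<epsilon>))"

end

(*
  If T were not a uniform BPB approximation of itself, there would be unit vectors x_n with
  |T x_n| -> 1, each at distance at least eps from every unit vector at which T attains its norm.
  Compactness of T and weak sequential compactness of the ball of the reflexive space give a
  subsequence with T x_n -> y in norm and x_n -> x weakly.  Then T x = y, so |T x| = 1 and hence
  |x| = 1; the Kadets-Klee property upgrades the weak convergence to norm convergence, so x_n
  eventually lies within eps of the norm-attaining unit vector x, a contradiction.  In finite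
  dimensions every operator is compact.

  Weak sequential compactness is derived from Hahn-Banach alone.  By reflexivity, a Banach limit
  along a bounded sequence is evaluation at some point.  Along a diagonal subsequence, a countable
  family of functionals norming the closed span of the sequence converges; the points obtained from
  all further subsequences then agree on this family, hence coincide, which forces weak convergence.
*)

theory Submission
  imports Defs "HOL-Library.Diagonal_Subsequence"
begin

section \<open>Hahn--Banach for sublinear functionals\<close>

definition sublinear :: "('a::real_vector \<Rightarrow> real) \<Rightarrow> bool" where
  "sublinear p \<longleftrightarrow>
     (\<forall>x y. p (x + y) \<le> p x + p y) \<and> (\<forall>c x. c \<ge> 0 \<longrightarrow> p (c *\<^sub>R x) = c * p x)"

text \<open>Partial linear functionals are represented by their graphs, so that Zorn's lemma can be
  applied to set inclusion.\<close>

definition dominated_linear_graph :: "('a::real_vector \<Rightarrow> real) \<Rightarrow> ('a \<times> real) set \<Rightarrow> bool" where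
  "dominated_linear_graph p G \<longleftrightarrow>
     (\<forall>x a b. (x, a) \<in> G \<longrightarrow> (x, b) \<in> G \<longrightarrow> a = b) \<and>
     (\<forall>x a y b. (x, a) \<in> G \<longrightarrow> (y, b) \<in> G \<longrightarrow> (x + y, a + b) \<in> G) \<and>
     (\<forall>x a c. (x, a) \<in> G \<longrightarrow> (c *\<^sub>R x, c * a) \<in> G) \<and>
     (\<forall>x a. (x, a) \<in> G \<longrightarrow> a \<le> p x)"

lemma sublinear_zero: "sublinear p \<Longrightarrow> p 0 = 0"
  unfolding sublinear_def by (metis mult_zero_left order_refl scaleR_zero_left)

lemma dominated_linear_graph_insert_zero:
  assumes "dominated_linear_graph p G" and "sublinear p"
  shows "dominated_linear_graph p (insert (0, 0) G)"
proof (cases "G = {}")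
  case True
  then show ?thesis using sublinear_zero[OF assms(2)] unfolding dominated_linear_graph_def by auto
next
  case False
  then obtain x a where "(x, a) \<in> G" by auto
  then have "(0, 0) \<in> G" using assms(1) unfolding dominated_linear_graph_def
    by (metis mult_zero_left scaleR_zero_left)
  then show ?thesis using assms(1) by (simp add: insert_absorb)
qed

lemma dominated_linear_graph_extension_constant:
  assumes G: "dominated_linear_graph p G" and p: "sublinear p"
  obtains c where "\<And>s a. (s, a) \<in> G \<Longrightarrow> a - p (s - z) \<le> c"
    and "\<And>s a. (s, a) \<in> G \<Longrightarrow> c \<le> p (s + z) - a"
proof -
  have bound: "a' - p (s' - z) \<le> p (s + z) - a" if "(s, a) \<in> G" "(s', a') \<in> G" for s a s' a'
  proof -
    have "a + a' \<le> p (s + s')"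
      using G that unfolding dominated_linear_graph_def by blast
    also have "\<dots> \<le> p (s + z) + p (s' - z)"
      using p unfolding sublinear_def by (metis add.assoc diff_add_cancel add.commute)
    finally show ?thesis by simp
  qed
  show ?thesis
  proof (cases "G = {}")
    case True
    then show ?thesis using that by blast
  next
    case False
    define S where "S = {a - p (s - z) | s a. (s, a) \<in> G}"
    obtain s0 a0 where "(s0, a0) \<in> G" using False by auto
    then have "bdd_above S" using bound unfolding S_def by (auto intro!: bdd_aboveI[of _ "p (s0 + z) - a0"])
    moreover have "S \<noteq> {}" using False unfolding S_def by auto
    ultimately show ?thesis
    proof (intro that[of "Sup S"])
      show "a - p (s - z) \<le> Sup S" if "(s, a) \<in> G" for s a
        using \<open>bdd_above S\<close> that by (intro cSup_upper) (auto simp: S_def)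
      show "Sup S \<le> p (s + z) - a" if "(s, a) \<in> G" for s a
        using \<open>S \<noteq> {}\<close> that bound by (intro cSup_least) (auto simp: S_def)
    qed
  qed
qed

lemma dominated_linear_graph_extension_dominated:
  assumes G: "dominated_linear_graph p G" and p: "sublinear p"
    and lower: "\<And>s a. (s, a) \<in> G \<Longrightarrow> a - p (s - z) \<le> c"
    and upper: "\<And>s a. (s, a) \<in> G \<Longrightarrow> c \<le> p (s + z) - a"
    and sa: "(s, a) \<in> G"
  shows "a + t * c \<le> p (s + t *\<^sub>R z)"
proof -
  have scale: "((1 / u) *\<^sub>R s, (1 / u) * a) \<in> G" for u
    using G sa unfolding dominated_linear_graph_def by blast
  have hom: "p (u *\<^sub>R x) = u * p x" if "u \<ge> 0" for u x
    using p that unfolding sublinear_def by blast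
  consider "t = 0" | "t > 0" | "t < 0" by linarith
  then show ?thesis
  proof cases
    case 1
    then show ?thesis using G sa unfolding dominated_linear_graph_def by auto
  next
    case 2
    have "t * c \<le> t * (p ((1 / t) *\<^sub>R s + z) - (1 / t) * a)"
      using upper[OF scale[of t]] 2 by (intro mult_left_mono) auto
    also have "\<dots> = p (t *\<^sub>R ((1 / t) *\<^sub>R s + z)) - a"
      using 2 by (simp add: hom right_diff_distrib)
    finally show ?thesis using 2 by (simp add: scaleR_add_right)
  next
    case 3
    define u where "u = -t"
    have u: "u > 0" using 3 by (simp add: u_def)
    have "u * ((1 / u) * a - p ((1 / u) *\<^sub>R s - z)) \<le> u * c"
      using lower[OF scale[of u]] u by (intro mult_left_mono) auto
    also have "u * ((1 / u) * a - p ((1 / u) *\<^sub>R s - z)) = a - p (u *\<^sub>R ((1 / u) *\<^sub>R s - z))"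
      using u by (simp add: hom right_diff_distrib)
    finally show ?thesis using u by (simp add: u_def scaleR_diff_right)
  qed
qed

lemma dominated_linear_graph_decomposition_unique:
  assumes G: "dominated_linear_graph p G" and z: "z \<notin> fst ` G"
    and elems: "(s1, a1) \<in> G" "(s2, a2) \<in> G" and eq: "s1 + t1 *\<^sub>R z = s2 + t2 *\<^sub>R z"
  shows "t1 = t2" "a1 = a2"
proof -
  have add: "\<And>x a y b. (x, a) \<in> G \<Longrightarrow> (y, b) \<in> G \<Longrightarrow> (x + y, a + b) \<in> G"
    and scale: "\<And>x a r. (x, a) \<in> G \<Longrightarrow> (r *\<^sub>R x, r * a) \<in> G"
    using G unfolding dominated_linear_graph_def by blast+
  have diff: "(s2 - s1, a2 - a1) \<in> G"
    using add[OF elems(2) scale[OF elems(1), of "-1"]] by simp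
  show "t1 = t2"
  proof (rule ccontr)
    assume "t1 \<noteq> t2"
    moreover have "(t1 - t2) *\<^sub>R z = s2 - s1"
      using eq by (simp add: algebra_simps)
    ultimately have "z = (1 / (t1 - t2)) *\<^sub>R (s2 - s1)"
      by (simp add: eq_vector_fraction_iff)
    then show False using z scale[OF diff] by force
  qed
  then show "a1 = a2"
    using G elems eq unfolding dominated_linear_graph_def by auto
qed

lemma dominated_linear_graph_extension:
  assumes G: "dominated_linear_graph p G" and p: "sublinear p" and z: "z \<notin> fst ` G"
    and lower: "\<And>s a. (s, a) \<in> G \<Longrightarrow> a - p (s - z) \<le> c"
    and upper: "\<And>s a. (s, a) \<in> G \<Longrightarrow> c \<le> p (s + z) - a"
  shows "dominated_linear_graph p {(s + t *\<^sub>R z, a + t * c) | s a t. (s, a) \<in> G}"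
    (is "dominated_linear_graph p ?G'")
proof -
  have add: "\<And>x a y b. (x, a) \<in> G \<Longrightarrow> (y, b) \<in> G \<Longrightarrow> (x + y, a + b) \<in> G"
    and scale: "\<And>x a r. (x, a) \<in> G \<Longrightarrow> (r *\<^sub>R x, r * a) \<in> G"
    using G unfolding dominated_linear_graph_def by blast+
  have "a = b" if elems: "(x, a) \<in> ?G'" "(x, b) \<in> ?G'" for x a b
  proof -
    obtain s1 a1 t1 s2 a2 t2 where 1: "x = s1 + t1 *\<^sub>R z" "a = a1 + t1 * c" "(s1, a1) \<in> G"
      and 2: "x = s2 + t2 *\<^sub>R z" "b = a2 + t2 * c" "(s2, a2) \<in> G"
      using elems by blast
    then have "s1 + t1 *\<^sub>R z = s2 + t2 *\<^sub>R z"
      by simp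
    then show ?thesis
      using dominated_linear_graph_decomposition_unique[OF G z 1(3) 2(3)] 1(2) 2(2) by simp
  qed
  moreover have "(x + y, a + b) \<in> ?G'" if elems: "(x, a) \<in> ?G'" "(y, b) \<in> ?G'" for x a y b
  proof -
    obtain s1 a1 t1 s2 a2 t2 where "x = s1 + t1 *\<^sub>R z" "a = a1 + t1 * c" "(s1, a1) \<in> G"
      and "y = s2 + t2 *\<^sub>R z" "b = a2 + t2 * c" "(s2, a2) \<in> G"
      using elems by blast
    then have "(x + y, a + b) = ((s1 + s2) + (t1 + t2) *\<^sub>R z, (a1 + a2) + (t1 + t2) * c)"
      by (simp add: algebra_simps)
    then show ?thesis using add \<open>(s1, a1) \<in> G\<close> \<open>(s2, a2) \<in> G\<close> by blast
  qed
  moreover have "(r *\<^sub>R x, r * a) \<in> ?G'" if elem: "(x, a) \<in> ?G'" for x a r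
  proof -
    obtain s1 a1 t1 where "x = s1 + t1 *\<^sub>R z" "a = a1 + t1 * c" "(s1, a1) \<in> G"
      using elem by blast
    then have "(r *\<^sub>R x, r * a) = (r *\<^sub>R s1 + (r * t1) *\<^sub>R z, r * a1 + (r * t1) * c)"
      by (simp add: algebra_simps)
    then show ?thesis using scale \<open>(s1, a1) \<in> G\<close> by blast
  qed
  moreover have "a \<le> p x" if "(x, a) \<in> ?G'" for x a
    using that dominated_linear_graph_extension_dominated[OF G p lower upper] by blast
  ultimately show ?thesis
    unfolding dominated_linear_graph_def by blast
qed

lemma dominated_linear_graph_extend:
  assumes G: "dominated_linear_graph p G" and p: "sublinear p"
  obtains G' where "G \<subseteq> G'" "dominated_linear_graph p G'" "z \<in> fst ` G'"
proof -
  define G0 where "G0 = insert (0, 0) G"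
  have G0: "dominated_linear_graph p G0"
    unfolding G0_def by (rule dominated_linear_graph_insert_zero[OF G p])
  show ?thesis
  proof (cases "z \<in> fst ` G0")
    case True
    then show ?thesis using G0 that[of G0] by (auto simp: G0_def)
  next
    case False
    obtain c where lower: "\<And>s a. (s, a) \<in> G0 \<Longrightarrow> a - p (s - z) \<le> c"
      and upper: "\<And>s a. (s, a) \<in> G0 \<Longrightarrow> c \<le> p (s + z) - a"
      using dominated_linear_graph_extension_constant[OF G0 p] by blast
    define G' where "G' = {(s + t *\<^sub>R z, a + t * c) | s a t. (s, a) \<in> G0}"
    have "dominated_linear_graph p G'"
      unfolding G'_def by (rule dominated_linear_graph_extension[OF G0 p False lower upper])
    moreover have "G \<subseteq> G'"
      unfolding G'_def G0_def by (force intro: exI[of _ 0])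
    moreover have "z \<in> fst ` G'"
      unfolding G'_def G0_def by (force intro: image_eqI[where x = "(z, c)"])
    ultimately show ?thesis using that by blast
  qed
qed

lemma dominated_linear_graph_Union_chain:
  assumes "C \<in> chains {H. dominated_linear_graph p H}"
  shows "dominated_linear_graph p (\<Union>C)"
proof -
  have members: "\<And>H. H \<in> C \<Longrightarrow> dominated_linear_graph p H"
    using assms unfolding chains_def by blast
  have common: "\<exists>H\<in>C. u \<in> H \<and> v \<in> H" if "u \<in> \<Union>C" "v \<in> \<Union>C" for u v
    using assms that unfolding chains_def chain_subset_def by blast
  show ?thesis unfolding dominated_linear_graph_def
  proof (intro conjI allI impI)
    fix x a b assume "(x, a) \<in> \<Union>C" "(x, b) \<in> \<Union>C"
    then show "a = b" using common members unfolding dominated_linear_graph_def by meson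
  next
    fix x a y b assume "(x, a) \<in> \<Union>C" "(y, b) \<in> \<Union>C"
    then show "(x + y, a + b) \<in> \<Union>C"
      using common members unfolding dominated_linear_graph_def by (meson UnionI)
  next
    fix x a c assume "(x, a) \<in> \<Union>C"
    then show "(c *\<^sub>R x, c * a) \<in> \<Union>C" using members unfolding dominated_linear_graph_def by blast
  next
    fix x a assume "(x, a) \<in> \<Union>C"
    then show "a \<le> p x" using members unfolding dominated_linear_graph_def by blast
  qed
qed

theorem hahn_banach:
  assumes G: "dominated_linear_graph p G" and p: "sublinear p"
  obtains L where "linear L" "\<And>x. L x \<le> p x" "\<And>x a. (x, a) \<in> G \<Longrightarrow> L x = a"
proof -
  let ?A = "{H. G \<subseteq> H \<and> dominated_linear_graph p H}"
  have "\<exists>M\<in>?A. \<forall>X\<in>?A. M \<subseteq> X \<longrightarrow> X = M"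
  proof (rule Zorn_Lemma2, intro ballI)
    fix C assume C: "C \<in> chains ?A"
    then have "C \<in> chains {H. dominated_linear_graph p H}"
      unfolding chains_def by blast
    then have "\<Union>C \<in> ?A" if "C \<noteq> {}"
      using C that dominated_linear_graph_Union_chain unfolding chains_def by blast
    then show "\<exists>U\<in>?A. \<forall>X\<in>C. X \<subseteq> U" using G by (cases "C = {}") auto
  qed
  then obtain M where "G \<subseteq> M" and M: "dominated_linear_graph p M"
    and maximal: "\<And>X. G \<subseteq> X \<Longrightarrow> dominated_linear_graph p X \<Longrightarrow> M \<subseteq> X \<Longrightarrow> X = M"
    by auto
  have functional: "\<And>x a b. (x, a) \<in> M \<Longrightarrow> (x, b) \<in> M \<Longrightarrow> a = b"
    and add: "\<And>x a y b. (x, a) \<in> M \<Longrightarrow> (y, b) \<in> M \<Longrightarrow> (x + y, a + b) \<in> M"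
    and scale: "\<And>x a c. (x, a) \<in> M \<Longrightarrow> (c *\<^sub>R x, c * a) \<in> M"
    and dom: "\<And>x a. (x, a) \<in> M \<Longrightarrow> a \<le> p x"
    using M unfolding dominated_linear_graph_def by blast+
  have total: "\<exists>a. (z, a) \<in> M" for z
  proof -
    obtain G' where "M \<subseteq> G'" "dominated_linear_graph p G'" "z \<in> fst ` G'"
      using dominated_linear_graph_extend[OF M p] .
    then have "G' = M" using maximal \<open>G \<subseteq> M\<close> by blast
    then show ?thesis using \<open>z \<in> fst ` G'\<close> by force
  qed
  define L where "L z = (THE a. (z, a) \<in> M)" for z
  have L_eq: "L z = a" if "(z, a) \<in> M" for z a
    unfolding L_def using that functional by blast
  have LM: "(z, L z) \<in> M" for z
    using total[of z] L_eq by blast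
  have "linear L"
    by (rule linearI) (use L_eq add scale LM in auto)
  then show ?thesis using that L_eq LM dom \<open>G \<subseteq> M\<close> by blast
qed

section \<open>Separating and norming functionals\<close>

lemma sublinear_scaled_norm: "c \<ge> 0 \<Longrightarrow> sublinear (\<lambda>x::'a::real_normed_vector. c * norm x)"
  unfolding sublinear_def by (auto simp: distrib_left[symmetric] mult_left_mono norm_triangle_ineq)

lemma blinfun_of_dominated_linear:
  fixes L :: "'a::real_normed_vector \<Rightarrow> real"
  assumes L: "linear L" and dom: "\<And>x. L x \<le> C * norm x" and C: "C \<ge> 0"
  obtains f :: "'a \<Rightarrow>\<^sub>L real" where "blinfun_apply f = L" "norm f \<le> C"
proof -
  have bound: "norm (L x) \<le> norm x * C" for x
    using dom[of x] dom[of "-x"] linear_neg[OF L, of x] by (simp add: abs_le_iff mult.commute)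
  then have "bounded_linear L"
    by (rule bounded_linear_intro[OF linear_add[OF L] linear_scale[OF L]])
  then have apply_eq: "blinfun_apply (Blinfun L) = L"
    by (rule bounded_linear_Blinfun_apply)
  have "norm (Blinfun L) \<le> C"
    using bound by (intro norm_blinfun_bound[OF C]) (simp add: apply_eq mult.commute)
  with apply_eq show ?thesis by (rule that)
qed

lemma exists_functional_annihilating_closed_subspace:
  fixes M :: "'a::real_normed_vector set"
  assumes M: "subspace M" "closed M" and z: "z \<notin> M"
  obtains f :: "'a \<Rightarrow>\<^sub>L real"
    where "\<And>m. m \<in> M \<Longrightarrow> blinfun_apply f m = 0" "blinfun_apply f z = 1" "norm f \<le> 1 / infdist z M"
proof -
  define \<delta> where "\<delta> = infdist z M"
  define p where "p x = (1 / \<delta>) * norm x" for x :: 'a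
  have \<delta>: "\<delta> > 0"
    using M z in_closed_iff_infdist_zero[OF M(2), of z] infdist_nonneg[of z M] subspace_0[OF M(1)]
    unfolding \<delta>_def by (metis empty_iff order_neq_le_trans)
  have p: "sublinear p"
    unfolding p_def using \<delta> by (intro sublinear_scaled_norm) simp
  define G where "G = {(m, 0 :: real) | m. m \<in> M}"
  have G: "dominated_linear_graph p G"
    unfolding dominated_linear_graph_def G_def p_def
    using M(1) \<delta> by (auto simp: subspace_add subspace_scale)
  have "\<delta> \<le> norm (m + z)" if "m \<in> M" for m
    using infdist_le[of "- m" M z] M(1) that unfolding \<delta>_def
    by (simp add: subspace_neg dist_norm add.commute)
  then have "dominated_linear_graph p {(s + t *\<^sub>R z, a + t * 1) | s a t. (s, a) \<in> G}"
    using \<delta> z by (intro dominated_linear_graph_extension[OF G p])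
      (auto simp: G_def p_def field_simps intro: order_trans[OF _ norm_ge_zero])
  then obtain L where L: "linear L" "\<And>x. L x \<le> p x"
    and L_graph: "\<And>x a. (x, a) \<in> {(s + t *\<^sub>R z, a + t * 1) | s a t. (s, a) \<in> G} \<Longrightarrow> L x = a"
    using p by (rule hahn_banach) blast
  have "L x \<le> (1 / \<delta>) * norm x" for x
    using L(2) by (simp add: p_def)
  moreover have "1 / \<delta> \<ge> 0"
    using \<delta> by simp
  ultimately obtain f :: "'a \<Rightarrow>\<^sub>L real" where f: "blinfun_apply f = L" "norm f \<le> 1 / \<delta>"
    using blinfun_of_dominated_linear[OF L(1)] by blast
  show ?thesis
  proof (rule that)
    show "blinfun_apply f m = 0" if "m \<in> M" for m
      using that f(1) L_graph[of m 0] unfolding G_def by force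
    show "blinfun_apply f z = 1"
      using M(1) subspace_0 f(1) L_graph[of z 1] unfolding G_def by force
    show "norm f \<le> 1 / infdist z M"
      using f(2) unfolding \<delta>_def .
  qed
qed

lemma exists_norming_functional:
  fixes d :: "'a::real_normed_vector"
  obtains f :: "'a \<Rightarrow>\<^sub>L real" where "norm f \<le> 1" "blinfun_apply f d = norm d"
proof (cases "d = 0")
  case True
  then show ?thesis using that[of 0] by simp
next
  case False
  obtain f :: "'a \<Rightarrow>\<^sub>L real" where "blinfun_apply f d = 1" "norm f \<le> 1 / norm d"
    using exists_functional_annihilating_closed_subspace[of "{0}" d] False
    by (auto simp: subspace_0 dist_norm)
  then show ?thesis
    using that[of "norm d *\<^sub>R f"] False by (simp add: field_simps scaleR_blinfun.rep_eq)
qed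

lemma subspace_closure:
  fixes S :: "'a::real_normed_vector set"
  assumes "subspace S"
  shows "subspace (closure S)"
proof -
  have "x + y \<in> closure S" if xy: "x \<in> closure S" "y \<in> closure S" for x y
  proof -
    obtain u v where "\<forall>n. u n \<in> S" "u \<longlonglongrightarrow> x" "\<forall>n. v n \<in> S" "v \<longlonglongrightarrow> y"
      using xy unfolding closure_sequential by blast
    then show ?thesis
      using assms unfolding closure_sequential
      by (intro exI[of _ "\<lambda>n. u n + v n"]) (auto intro: tendsto_add subspace_add)
  qed
  moreover have "c *\<^sub>R x \<in> closure S" if x: "x \<in> closure S" for c x
  proof -
    obtain u where "\<forall>n. u n \<in> S" "u \<longlonglongrightarrow> x"
      using x unfolding closure_sequential by blast
    then show ?thesis
      using assms unfolding closure_sequential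
      by (intro exI[of _ "\<lambda>n. c *\<^sub>R u n"]) (auto intro: tendsto_scaleR subspace_scale)
  qed
  ultimately show ?thesis
    using assms closure_subset subspace_0 unfolding subspace_def by blast
qed

section \<open>Banach limits and weak sequential compactness\<close>

definition limsup_functional :: "(nat \<Rightarrow> 'a::real_normed_vector) \<Rightarrow> ('a \<Rightarrow>\<^sub>L real) \<Rightarrow> real" where
  "limsup_functional xs f = real_of_ereal (limsup (\<lambda>n. ereal (blinfun_apply f (xs n))))"

lemma limsup_functional_bounded:
  fixes xs :: "nat \<Rightarrow> 'a::real_normed_vector"
  assumes B: "\<And>n. norm (xs n) \<le> B"
  shows "limsup (\<lambda>n. ereal (blinfun_apply f (xs n))) = ereal (limsup_functional xs f)"
    and "limsup_functional xs f \<le> B * norm f"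
proof -
  have bound: "\<bar>blinfun_apply f (xs n)\<bar> \<le> B * norm f" for n
    using norm_blinfun[of f "xs n"] mult_left_mono[OF B[of n] norm_ge_zero[of f]]
    by (simp add: mult.commute)
  have upper: "blinfun_apply f (xs n) \<le> B * norm f"
    and lower: "-(B * norm f) \<le> blinfun_apply f (xs n)" for n
    using bound[of n] by linarith+
  have limsup_upper: "limsup (\<lambda>n. ereal (blinfun_apply f (xs n))) \<le> ereal (B * norm f)"
    using upper by (intro Limsup_bounded always_eventually) simp
  moreover have "ereal (-(B * norm f)) \<le> limsup (\<lambda>n. ereal (blinfun_apply f (xs n)))"
    using lower by (intro le_Limsup always_eventually) simp_all
  ultimately show finite: "limsup (\<lambda>n. ereal (blinfun_apply f (xs n))) = ereal (limsup_functional xs f)"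
    unfolding limsup_functional_def by (cases "limsup (\<lambda>n. ereal (blinfun_apply f (xs n)))") auto
  show "limsup_functional xs f \<le> B * norm f"
    using limsup_upper unfolding finite by simp
qed

lemma limsup_functional_tendsto:
  assumes "(\<lambda>n. blinfun_apply f (xs n)) \<longlonglongrightarrow> c"
  shows "limsup_functional xs f = c"
  using lim_imp_Limsup[OF trivial_limit_sequentially tendsto_ereal[OF assms]]
  unfolding limsup_functional_def by simp

lemma sublinear_limsup_functional:
  fixes xs :: "nat \<Rightarrow> 'a::real_normed_vector"
  assumes B: "\<And>n. norm (xs n) \<le> B"
  shows "sublinear (limsup_functional xs)"
  unfolding sublinear_def
proof (intro conjI allI impI)
  note finite = limsup_functional_bounded(1)[where xs = xs and B = B, OF B]
  fix f g :: "'a \<Rightarrow>\<^sub>L real"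
  have "limsup (\<lambda>n. ereal (blinfun_apply (f + g) (xs n)))
      \<le> limsup (\<lambda>n. ereal (blinfun_apply f (xs n))) + limsup (\<lambda>n. ereal (blinfun_apply g (xs n)))"
    unfolding plus_blinfun.rep_eq plus_ereal.simps(1)[symmetric]
    by (rule ereal_limsup_add_mono)
  then show "limsup_functional xs (f + g) \<le> limsup_functional xs f + limsup_functional xs g"
    by (simp add: finite)
next
  note finite = limsup_functional_bounded(1)[where xs = xs and B = B, OF B]
  fix c :: real and f :: "'a \<Rightarrow>\<^sub>L real"
  assume "c \<ge> 0"
  have "limsup (\<lambda>n. ereal (blinfun_apply (c *\<^sub>R f) (xs n)))
      = limsup (\<lambda>n. ereal c * ereal (blinfun_apply f (xs n)))"
    by (simp add: scaleR_blinfun.rep_eq)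
  also have "\<dots> = ereal c * limsup (\<lambda>n. ereal (blinfun_apply f (xs n)))"
    using \<open>c \<ge> 0\<close> by (rule limsup_ereal_mult_left)
  finally show "limsup_functional xs (c *\<^sub>R f) = c * limsup_functional xs f"
    by (simp add: finite)
qed

lemma exists_banach_limit:
  fixes xs :: "nat \<Rightarrow> 'a::real_normed_vector"
  assumes B: "\<And>n. norm (xs n) \<le> B"
  obtains \<phi> :: "('a \<Rightarrow>\<^sub>L real) \<Rightarrow> real" where "linear \<phi>" "\<And>f. \<phi> f \<le> B * norm f"
    "\<And>f c. (\<lambda>n. blinfun_apply f (xs n)) \<longlonglongrightarrow> c \<Longrightarrow> \<phi> f = c"
proof -
  have "dominated_linear_graph (limsup_functional xs) {}"
    unfolding dominated_linear_graph_def by simp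
  then obtain L where L: "linear L" "\<And>f. L f \<le> limsup_functional xs f"
    by (rule hahn_banach[OF _ sublinear_limsup_functional[where xs = xs, OF B]]) blast
  have "L f = c" if lim: "(\<lambda>n. blinfun_apply f (xs n)) \<longlonglongrightarrow> c" for f c
  proof -
    have "(\<lambda>n. blinfun_apply (- f) (xs n)) \<longlonglongrightarrow> - c"
      using tendsto_minus[OF lim] by (simp add: uminus_blinfun.rep_eq)
    then have "- L f \<le> - c"
      using L(2)[of "- f"] linear_neg[OF L(1), of f] by (simp add: limsup_functional_tendsto)
    then show ?thesis
      using L(2)[of f] limsup_functional_tendsto[OF lim] by simp
  qed
  moreover have "L f \<le> B * norm f" for f
    using L(2)[of f] limsup_functional_bounded(2)[where xs = xs and B = B and f = f, OF B] by simp
  ultimately show ?thesis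
    using that L(1) by blast
qed

text \<open>Every weak cluster point of \<open>xs\<close> has this property; in a reflexive space Banach limits
  produce such points without any compactness argument.\<close>

definition respects_weak_limits :: "(nat \<Rightarrow> 'a::real_normed_vector) \<Rightarrow> 'a \<Rightarrow> bool" where
  "respects_weak_limits xs x \<longleftrightarrow>
     (\<forall>(f :: 'a \<Rightarrow>\<^sub>L real) c. (\<lambda>n. blinfun_apply f (xs n)) \<longlonglongrightarrow> c \<longrightarrow> blinfun_apply f x = c)"

lemma reflexive_bounded_seq_respects_weak_limits:
  fixes xs :: "nat \<Rightarrow> 'a::real_normed_vector"
  assumes refl: "reflexive_space TYPE('a)" and B: "\<And>n. norm (xs n) \<le> B"
  obtains x where "respects_weak_limits xs x"
proof -
  obtain \<phi> :: "('a \<Rightarrow>\<^sub>L real) \<Rightarrow> real" where \<phi>: "linear \<phi>" "\<And>f. \<phi> f \<le> B * norm f"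
    and lim: "\<And>f c. (\<lambda>n. blinfun_apply f (xs n)) \<longlonglongrightarrow> c \<Longrightarrow> \<phi> f = c"
    using exists_banach_limit[of xs B] B by blast
  have "B \<ge> 0" using B[of 0] norm_ge_zero[of "xs 0"] by linarith
  then obtain \<Phi> :: "('a \<Rightarrow>\<^sub>L real) \<Rightarrow>\<^sub>L real" where \<Phi>: "blinfun_apply \<Phi> = \<phi>"
    using blinfun_of_dominated_linear[OF \<phi>] by blast
  obtain x :: 'a where x: "\<And>f. blinfun_apply \<Phi> f = blinfun_apply f x"
    using refl unfolding reflexive_space_def by blast
  have "blinfun_apply f x = c"
    if "(\<lambda>n. blinfun_apply f (xs n)) \<longlonglongrightarrow> c" for f :: "'a \<Rightarrow>\<^sub>L real" and c
    using x[of f] lim[OF that] by (simp add: \<Phi>)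
  then show ?thesis
    using that unfolding respects_weak_limits_def by blast
qed

lemma not_tendsto_imp_subseq_bounded_away:
  fixes u :: "nat \<Rightarrow> real"
  assumes "\<not> u \<longlonglongrightarrow> a"
  obtains e and s :: "nat \<Rightarrow> nat" where "e > 0" "strict_mono s" "\<And>n. e \<le> dist (u (s n)) a"
proof -
  obtain e where "e > 0" "\<not> eventually (\<lambda>n. dist (u n) a < e) sequentially"
    using assms unfolding tendsto_iff by blast
  moreover from this(2) have "frequently (\<lambda>n. e \<le> dist (u n) a) cofinite"
    by (simp add: cofinite_eq_sequentially not_eventually not_less)
  then have "infinite {n. e \<le> dist (u n) a}"
    by (simp add: frequently_cofinite)
  moreover obtain s :: "nat \<Rightarrow> nat" where "strict_mono s" "\<forall>n. s n \<in> {n. e \<le> dist (u n) a}"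
    using infinite_enumerate[OF \<open>infinite _\<close>] by blast
  ultimately show ?thesis
    by (intro that[of e s]) auto
qed

lemma weakly_converges_if_subseq_limits_unique:
  fixes ys :: "nat \<Rightarrow> 'a::real_normed_vector"
  assumes refl: "reflexive_space TYPE('a)" and B: "\<And>n. norm (ys n) \<le> B"
    and unique: "\<And>s x'. strict_mono s \<Longrightarrow> respects_weak_limits (ys \<circ> s) x' \<Longrightarrow> x' = x"
  shows "weakly_converges ys x"
  unfolding weakly_converges_def
proof (rule allI, rule ccontr)
  fix f :: "'a \<Rightarrow>\<^sub>L real"
  assume "\<not> (\<lambda>n. blinfun_apply f (ys n)) \<longlonglongrightarrow> blinfun_apply f x"
  then obtain e and s :: "nat \<Rightarrow> nat" where e: "e > 0" and s: "strict_mono s"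
    and away: "\<And>n. e \<le> dist (blinfun_apply f (ys (s n))) (blinfun_apply f x)"
    by (rule not_tendsto_imp_subseq_bounded_away) blast
  have "norm (blinfun_apply f (ys (s n))) \<le> norm f * B" for n
    using norm_blinfun[of f "ys (s n)"] mult_left_mono[OF B[of "s n"] norm_ge_zero[of f]] by linarith
  then have "bounded (range (\<lambda>n. blinfun_apply f (ys (s n))))"
    unfolding bounded_iff by auto
  then obtain a and t :: "nat \<Rightarrow> nat" where t: "strict_mono t"
    and "((\<lambda>n. blinfun_apply f (ys (s n))) \<circ> t) \<longlonglongrightarrow> a"
    using bounded_imp_convergent_subsequence[OF \<open>bounded _\<close>] by blast
  then have a: "(\<lambda>n. blinfun_apply f (ys (s (t n)))) \<longlonglongrightarrow> a"
    by (simp add: comp_def)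
  have "e \<le> dist a (blinfun_apply f x)"
    using away by (intro LIMSEQ_le_const[OF tendsto_dist[OF a tendsto_const]]) auto
  moreover obtain x' where x': "respects_weak_limits (ys \<circ> (s \<circ> t)) x'"
    using reflexive_bounded_seq_respects_weak_limits[OF refl, of "ys \<circ> (s \<circ> t)" B] B by auto
  then have "blinfun_apply f x' = a"
    using a unfolding respects_weak_limits_def comp_def by blast
  moreover have "x' = x"
    using unique[OF strict_mono_o[OF s t] x'] .
  ultimately show False using e by simp
qed

lemma respects_weak_limits_closed_subspace:
  fixes M :: "'a::real_normed_vector set"
  assumes M: "subspace M" "closed M" and xs: "\<And>n. xs n \<in> M"
    and x: "respects_weak_limits xs x"
  shows "x \<in> M"
proof (rule ccontr)
  assume "x \<notin> M"
  then obtain g :: "'a \<Rightarrow>\<^sub>L real" where "\<And>m. m \<in> M \<Longrightarrow> blinfun_apply g m = 0" "blinfun_apply g x = 1"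
    using exists_functional_annihilating_closed_subspace[OF M] by blast
  moreover from this(1) have "(\<lambda>n. blinfun_apply g (xs n)) \<longlonglongrightarrow> 0"
    using xs by simp
  ultimately show False
    using x unfolding respects_weak_limits_def by fastforce
qed

lemma diagonal_convergent_subseq:
  fixes u :: "nat \<Rightarrow> nat \<Rightarrow> real"
  assumes "\<And>k. bounded (range (u k))"
  obtains r :: "nat \<Rightarrow> nat" where "strict_mono r" "\<And>k. convergent (u k \<circ> r)"
proof -
  interpret subseqs "\<lambda>k s. convergent (u k \<circ> s)"
  proof
    fix k and s :: "nat \<Rightarrow> nat"
    have "bounded (range (u k \<circ> s))"
      using assms[of k] by (rule bounded_subset) auto
    then obtain l and r' :: "nat \<Rightarrow> nat" where "strict_mono r'" "(u k \<circ> s \<circ> r') \<longlonglongrightarrow> l"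
      using bounded_imp_convergent_subsequence by blast
    then show "\<exists>r'. strict_mono r' \<and> convergent (u k \<circ> (s \<circ> r'))"
      unfolding convergent_def o_assoc by blast
  qed
  have "convergent (u k \<circ> diagseq)" for k
  proof -
    have "convergent (u k \<circ> (diagseq \<circ> (+) (Suc k)))"
      by (rule diagseq_holds) (auto simp: o_assoc convergent_subseq_convergent)
    then obtain L where "(\<lambda>i. u k (diagseq (i + Suc k))) \<longlonglongrightarrow> L"
      unfolding convergent_def by (auto simp: comp_def add.commute)
    then have "(\<lambda>i. u k (diagseq i)) \<longlonglongrightarrow> L"
      by (rule LIMSEQ_offset)
    then show ?thesis
      unfolding convergent_def comp_def by blast
  qed
  then show ?thesis using that subseq_diagseq by blast
qed

primrec rat_combinations :: "(nat \<Rightarrow> 'a::real_vector) \<Rightarrow> nat \<Rightarrow> 'a set" where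
  "rat_combinations xs 0 = {0}"
| "rat_combinations xs (Suc k) =
     (\<lambda>(q, i, d). q *\<^sub>R xs i + d) ` (\<rat> \<times> UNIV \<times> rat_combinations xs k)"

lemma countable_rat_combinations: "countable (\<Union>k. rat_combinations xs k)"
proof -
  have "countable (rat_combinations xs k)" for k
    by (induction k) (auto intro: countable_SIGMA countable_rat)
  then show ?thesis by blast
qed

lemma span_subset_closure_rat_combinations:
  fixes xs :: "nat \<Rightarrow> 'a::real_normed_vector"
  shows "span (range xs) \<subseteq> closure (\<Union>k. rat_combinations xs k)"
proof
  fix x assume "x \<in> span (range xs)"
  then show "x \<in> closure (\<Union>k. rat_combinations xs k)"
  proof (induction rule: span_induct_alt)
    case base
    have "0 \<in> (\<Union>k. rat_combinations xs k)"
      by (rule UN_I[of 0]) simp_all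
    then show ?case
      by (rule closure_subset[THEN subsetD])
  next
    case (step c z y)
    define D where "D = (\<Union>k. rat_combinations xs k)"
    obtain i where "z = xs i" using step(1) by blast
    define f where "f = (\<lambda>(q, d). q *\<^sub>R xs i + d)"
    have "f (q, d) \<in> D" if "q \<in> \<rat>" "d \<in> rat_combinations xs k" for q d k
    proof -
      have "f (q, d) \<in> rat_combinations xs (Suc k)"
        using that unfolding f_def rat_combinations.simps by (intro image_eqI[of _ _ "(q, i, d)"]) auto
      then show ?thesis unfolding D_def by blast
    qed
    then have "f ` (\<rat> \<times> D) \<subseteq> D"
      unfolding D_def by blast
    have "f ` closure (\<rat> \<times> D) \<subseteq> closure D"
    proof (rule image_closure_subset)
      show "continuous_on (closure (\<rat> \<times> D)) f"
        unfolding f_def split_beta by (intro continuous_intros)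
      show "f ` (\<rat> \<times> D) \<subseteq> closure D"
        using \<open>f ` (\<rat> \<times> D) \<subseteq> D\<close> closure_subset by (rule order_trans)
    qed simp
    moreover have "(c, y) \<in> closure (\<rat> \<times> D)"
      using step(2) by (simp add: closure_Times Rats_closure_real D_def)
    ultimately have "f (c, y) \<in> closure D"
      by blast
    then show ?case
      unfolding f_def D_def \<open>z = xs i\<close> by simp
  qed
qed

lemma countable_dense_norming_sequence:
  fixes D :: "'a::real_normed_vector set"
  assumes "countable D"
  obtains f :: "nat \<Rightarrow> 'a \<Rightarrow>\<^sub>L real"
    where "\<And>m. m \<in> closure D \<Longrightarrow> (\<And>k. blinfun_apply (f k) m = 0) \<Longrightarrow> m = 0"
proof (cases "D = {}")
  case True
  then show ?thesis using that by simp
next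
  case False
  define d where "d = from_nat_into D"
  have d: "range d = D"
    unfolding d_def using False assms by simp
  have "\<forall>k. \<exists>g :: 'a \<Rightarrow>\<^sub>L real. norm g \<le> 1 \<and> blinfun_apply g (d k) = norm (d k)"
    by (meson exists_norming_functional)
  then obtain f :: "nat \<Rightarrow> 'a \<Rightarrow>\<^sub>L real"
    where f: "\<And>k. norm (f k) \<le> 1" "\<And>k. blinfun_apply (f k) (d k) = norm (d k)"
    by metis
  have "m = 0" if m: "m \<in> closure D" and zero: "\<And>k. blinfun_apply (f k) m = 0" for m
  proof (rule ccontr)
    assume "m \<noteq> 0"
    then have "norm m / 2 > 0" by simp
    then obtain k where close: "dist (d k) m < norm m / 2"
      using m d unfolding closure_approachable by blast
    have "norm (d k) = blinfun_apply (f k) (d k - m)"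
      using f(2)[of k] zero[of k] by (simp add: blinfun.diff_right)
    also have "\<dots> \<le> norm (f k) * norm (d k - m)"
      using norm_blinfun[of "f k" "d k - m"] by simp
    also have "\<dots> \<le> dist (d k) m"
      using f(1)[of k] by (simp add: dist_norm mult_left_le_one_le)
    finally have "norm m \<le> 2 * dist (d k) m"
      using norm_triangle_ineq4[of "d k" "d k - m"] by (simp add: dist_norm)
    then show False using close by simp
  qed
  then show ?thesis using that by blast
qed

lemma respects_weak_limits_subseq_unique:
  fixes M :: "'a::real_normed_vector set" and f :: "nat \<Rightarrow> 'a \<Rightarrow>\<^sub>L real"
  assumes M: "subspace M" "closed M" and ys_M: "\<And>n. ys n \<in> M"
    and norming: "\<And>m. m \<in> M \<Longrightarrow> (\<And>k. blinfun_apply (f k) m = 0) \<Longrightarrow> m = 0"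
    and conv: "\<And>k. convergent (\<lambda>n. blinfun_apply (f k) (ys n))"
    and x: "respects_weak_limits ys x"
    and s: "strict_mono s" and x': "respects_weak_limits (ys \<circ> s) x'"
  shows "x' = x"
proof -
  have "x \<in> M" "x' \<in> M"
    using respects_weak_limits_closed_subspace[OF M _ x] respects_weak_limits_closed_subspace[OF M _ x']
      ys_M by auto
  moreover have "blinfun_apply (f k) (x' - x) = 0" for k
  proof -
    obtain L where L: "(\<lambda>n. blinfun_apply (f k) (ys n)) \<longlonglongrightarrow> L"
      using conv[of k] unfolding convergent_def by blast
    then have "(\<lambda>n. blinfun_apply (f k) ((ys \<circ> s) n)) \<longlonglongrightarrow> L"
      using LIMSEQ_subseq_LIMSEQ[OF L s] by (simp add: comp_def)
    then show ?thesis
      using L x x' unfolding respects_weak_limits_def by (simp add: blinfun.diff_right)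
  qed
  ultimately show "x' = x"
    using norming[of "x' - x"] M(1) by (simp add: subspace_diff)
qed

lemma reflexive_bounded_seq_weakly_convergent_subseq:
  fixes xs :: "nat \<Rightarrow> 'a::real_normed_vector"
  assumes refl: "reflexive_space TYPE('a)" and B: "\<And>n. norm (xs n) \<le> B"
  obtains r :: "nat \<Rightarrow> nat" and x where "strict_mono r" "weakly_converges (xs \<circ> r) x"
proof -
  define M where "M = closure (span (range xs))"
  have M: "subspace M" "closed M" and xs_M: "\<And>n. xs n \<in> M"
    unfolding M_def by (auto intro: subspace_closure closure_subset[THEN subsetD] span_base)
  obtain f :: "nat \<Rightarrow> 'a \<Rightarrow>\<^sub>L real"
    where norming: "\<And>m. m \<in> M \<Longrightarrow> (\<And>k. blinfun_apply (f k) m = 0) \<Longrightarrow> m = 0"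
    using countable_dense_norming_sequence[OF countable_rat_combinations, of xs]
      closure_mono[OF span_subset_closure_rat_combinations[of xs]]
    unfolding M_def by (metis closure_closure subsetD)
  have "bounded (range (\<lambda>n. blinfun_apply (f k) (xs n)))" for k
    unfolding bounded_iff
    using norm_blinfun[of "f k"] mult_left_mono[OF B norm_ge_zero[of "f k"]] order_trans by blast
  then obtain r :: "nat \<Rightarrow> nat" where r: "strict_mono r"
    and conv: "\<And>k. convergent ((\<lambda>n. blinfun_apply (f k) (xs n)) \<circ> r)"
    using diagonal_convergent_subseq[of "\<lambda>k n. blinfun_apply (f k) (xs n)"] by blast
  define ys where "ys = xs \<circ> r"
  have ys_B: "norm (ys n) \<le> B" for n
    using B by (simp add: ys_def)
  obtain x where x: "respects_weak_limits ys x"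
    using reflexive_bounded_seq_respects_weak_limits[OF refl, of ys B] ys_B by blast
  have ys_M: "ys n \<in> M" for n
    using xs_M by (simp add: ys_def)
  have ys_conv: "convergent (\<lambda>n. blinfun_apply (f k) (ys n))" for k
    using conv[of k] by (simp add: ys_def comp_def)
  have "weakly_converges ys x"
    by (intro weakly_converges_if_subseq_limits_unique[OF refl ys_B]
        respects_weak_limits_subseq_unique[where ys = ys and f = f, OF M ys_M norming ys_conv x])
  then show ?thesis
    using that r unfolding ys_def by blast
qed

section \<open>Compact operators\<close>

lemma weakly_converges_blinfun_tendsto_eq:
  fixes T :: "'a::real_normed_vector \<Rightarrow>\<^sub>L 'b::real_normed_vector"
  assumes weak: "weakly_converges zs x" and strong: "(\<lambda>n. blinfun_apply T (zs n)) \<longlonglongrightarrow> y"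
  shows "blinfun_apply T x = y"
proof -
  obtain g :: "'b \<Rightarrow>\<^sub>L real" where g: "blinfun_apply g (blinfun_apply T x - y) = norm (blinfun_apply T x - y)"
    using exists_norming_functional by blast
  have "(\<lambda>n. blinfun_apply (g o\<^sub>L T) (zs n)) \<longlonglongrightarrow> blinfun_apply (g o\<^sub>L T) x"
    using weak unfolding weakly_converges_def by blast
  moreover have "(\<lambda>n. blinfun_apply (g o\<^sub>L T) (zs n)) \<longlonglongrightarrow> blinfun_apply g y"
    using blinfun.tendsto[OF tendsto_const strong] by simp
  ultimately have "blinfun_apply g (blinfun_apply T x) = blinfun_apply g y"
    by (simp add: LIMSEQ_unique)
  then show ?thesis
    using g by (simp add: blinfun.diff_right)
qed

lemma weakly_converges_norm_le:
  fixes zs :: "nat \<Rightarrow> 'a::real_normed_vector"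
  assumes weak: "weakly_converges zs x" and B: "\<And>n. norm (zs n) \<le> B"
  shows "norm x \<le> B"
proof -
  obtain h :: "'a \<Rightarrow>\<^sub>L real" where h: "norm h \<le> 1" "blinfun_apply h x = norm x"
    using exists_norming_functional by blast
  have "blinfun_apply h (zs n) \<le> B" for n
  proof -
    have "blinfun_apply h (zs n) \<le> norm h * norm (zs n)"
      using norm_blinfun[of h "zs n"] by simp
    also have "\<dots> \<le> B"
      using mult_left_le_one_le[OF norm_ge_zero norm_ge_zero h(1)] B[of n] order_trans by blast
    finally show ?thesis .
  qed
  moreover have "(\<lambda>n. blinfun_apply h (zs n)) \<longlonglongrightarrow> blinfun_apply h x"
    using weak unfolding weakly_converges_def by blast
  ultimately show ?thesis
    using h(2) by (intro LIMSEQ_le_const2[of "\<lambda>n. blinfun_apply h (zs n)"]) auto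
qed

lemma compact_operator_convergent_subseq:
  fixes T :: "'a::real_normed_vector \<Rightarrow>\<^sub>L 'b::real_normed_vector"
  assumes "compact_operator T" and "\<And>n. norm (xs n) \<le> 1"
  obtains r :: "nat \<Rightarrow> nat" and y where "strict_mono r" "(\<lambda>n. blinfun_apply T (xs (r n))) \<longlonglongrightarrow> y"
proof -
  have "seq_compact (closure (blinfun_apply T ` cball 0 1))"
    using assms(1) unfolding compact_operator_def by (rule compact_imp_seq_compact)
  moreover have "\<forall>n. blinfun_apply T (xs n) \<in> closure (blinfun_apply T ` cball 0 1)"
    using assms(2) by (auto intro!: closure_subset[THEN subsetD] imageI)
  ultimately obtain y and r :: "nat \<Rightarrow> nat"
    where "strict_mono r" "((\<lambda>n. blinfun_apply T (xs n)) \<circ> r) \<longlonglongrightarrow> y"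
    by (rule seq_compactE)
  then show ?thesis
    using that by (simp add: comp_def)
qed

lemma compact_operator_maximizing_seq_converges:
  fixes T :: "'a::real_normed_vector \<Rightarrow>\<^sub>L 'b::real_normed_vector"
  assumes refl: "reflexive_space TYPE('a)" and kk: "kadets_klee TYPE('a)"
    and T: "compact_operator T" "norm T = 1"
    and xs: "\<And>n. norm (xs n) = 1" and max: "(\<lambda>n. norm (blinfun_apply T (xs n))) \<longlonglongrightarrow> 1"
  obtains r :: "nat \<Rightarrow> nat" and x
  where "strict_mono r" "norm x = 1" "norm (blinfun_apply T x) = 1" "(\<lambda>n. xs (r n)) \<longlonglongrightarrow> x"
proof -
  obtain r1 :: "nat \<Rightarrow> nat" and y
    where r1: "strict_mono r1" and y: "(\<lambda>n. blinfun_apply T (xs (r1 n))) \<longlonglongrightarrow> y"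
    using compact_operator_convergent_subseq[of T xs, OF T(1)] xs by (metis order_refl)
  obtain r2 :: "nat \<Rightarrow> nat" and x where r2: "strict_mono r2"
    and weak: "weakly_converges (xs \<circ> r1 \<circ> r2) x"
    using reflexive_bounded_seq_weakly_convergent_subseq[of "xs \<circ> r1" 1, OF refl] xs by (metis comp_apply order_refl)
  define zs where "zs = xs \<circ> r1 \<circ> r2"
  have Tzs: "(\<lambda>n. blinfun_apply T (zs n)) \<longlonglongrightarrow> y"
    using LIMSEQ_subseq_LIMSEQ[OF y r2] by (simp add: zs_def comp_def)
  have "(\<lambda>n. norm (blinfun_apply T (zs n))) \<longlonglongrightarrow> 1"
    using LIMSEQ_subseq_LIMSEQ[OF max strict_mono_o[OF r1 r2]] by (simp add: zs_def comp_def)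
  then have "norm y = 1"
    by (rule LIMSEQ_unique[OF tendsto_norm[OF Tzs]])
  moreover have "blinfun_apply T x = y"
    using weakly_converges_blinfun_tendsto_eq[OF weak] Tzs by (simp add: zs_def)
  moreover have "norm x \<le> 1"
    using weakly_converges_norm_le[OF weak] xs by simp
  moreover have "norm (blinfun_apply T x) \<le> norm x"
    using norm_blinfun[of T x] T(2) by simp
  ultimately have x: "norm x = 1" "norm (blinfun_apply T x) = 1"
    by simp_all
  moreover have "(\<lambda>n. norm (zs n)) \<longlonglongrightarrow> norm x"
    using xs x(1) by (simp add: zs_def)
  ultimately have "(\<lambda>n. norm (zs n - x)) \<longlonglongrightarrow> 0"
    using kk weak unfolding kadets_klee_def zs_def by blast
  then have "zs \<longlonglongrightarrow> x"
    by (simp add: LIM_zero_cancel tendsto_norm_zero_iff)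
  then show ?thesis
    using that[OF strict_mono_o[OF r1 r2] x] by (simp add: zs_def comp_def)
qed

lemma compact_operator_uniform_BPB_approx_self:
  fixes T :: "'a::real_normed_vector \<Rightarrow>\<^sub>L 'b::real_normed_vector"
  assumes refl: "reflexive_space TYPE('a)" and kk: "kadets_klee TYPE('a)"
    and T: "compact_operator T" "norm T = 1" and \<epsilon>: "\<epsilon> > 0"
  shows "uniform_BPB_approx T T \<epsilon>"
proof (rule ccontr)
  assume "\<not> uniform_BPB_approx T T \<epsilon>"
  then have H: "\<forall>\<delta>>0. \<exists>x0. norm x0 = 1 \<and> norm (blinfun_apply T x0) > 1 - \<delta> \<and>
      (\<forall>u0. norm (blinfun_apply T u0) = 1 \<longrightarrow> norm u0 = 1 \<longrightarrow> \<epsilon> \<le> norm (u0 - x0))"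
    using T(2) \<epsilon> unfolding uniform_BPB_approx_def by (auto simp: not_less) (meson not_le)
  have "\<forall>n. \<exists>x0. norm x0 = 1 \<and> norm (blinfun_apply T x0) > 1 - 1 / Suc n \<and>
      (\<forall>u0. norm (blinfun_apply T u0) = 1 \<longrightarrow> norm u0 = 1 \<longrightarrow> \<epsilon> \<le> norm (u0 - x0))"
  proof
    fix n :: nat
    show "\<exists>x0. norm x0 = 1 \<and> norm (blinfun_apply T x0) > 1 - 1 / Suc n \<and>
      (\<forall>u0. norm (blinfun_apply T u0) = 1 \<longrightarrow> norm u0 = 1 \<longrightarrow> \<epsilon> \<le> norm (u0 - x0))"
      using H[rule_format, of "1 / Suc n"] by simp
  qed
  then obtain xs where xs_all: "\<forall>n. norm (xs n) = 1 \<and> norm (blinfun_apply T (xs n)) > 1 - 1 / Suc n \<and>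
      (\<forall>u0. norm (blinfun_apply T u0) = 1 \<longrightarrow> norm u0 = 1 \<longrightarrow> \<epsilon> \<le> norm (u0 - xs n))"
    by (rule choice[THEN exE])
  have xs: "\<And>n. norm (xs n) = 1"
    and almost: "\<And>n. 1 - 1 / Suc n < norm (blinfun_apply T (xs n))"
    and far: "\<And>n u0. norm (blinfun_apply T u0) = 1 \<Longrightarrow> norm u0 = 1 \<Longrightarrow> \<epsilon> \<le> norm (u0 - xs n)"
    using xs_all by blast+
  have at_most: "norm (blinfun_apply T (xs n)) \<le> 1" for n
    using norm_blinfun[of T "xs n"] T(2) xs[of n] by simp
  have lower_lim: "(\<lambda>n. 1 - 1 / Suc n) \<longlonglongrightarrow> (1 :: real)"
    using tendsto_diff[OF tendsto_const LIMSEQ_inverse_real_of_nat, of 1] by (simp add: inverse_eq_divide)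
  have lower: "eventually (\<lambda>n. 1 - 1 / Suc n \<le> norm (blinfun_apply T (xs n))) sequentially"
    using almost by (intro always_eventually allI less_imp_le)
  have upper: "eventually (\<lambda>n. norm (blinfun_apply T (xs n)) \<le> 1) sequentially"
    using at_most by (intro always_eventually allI)
  have "(\<lambda>n. norm (blinfun_apply T (xs n))) \<longlonglongrightarrow> 1"
    by (rule tendsto_sandwich[OF lower upper lower_lim tendsto_const])
  then obtain r :: "nat \<Rightarrow> nat" and x where "strict_mono r"
    and x: "norm x = 1" "norm (blinfun_apply T x) = 1" and lim: "(\<lambda>n. xs (r n)) \<longlonglongrightarrow> x"
    by (rule compact_operator_maximizing_seq_converges[where xs = xs, OF refl kk T xs])
  obtain N where "\<forall>n\<ge>N. norm (xs (r n) - x) < \<epsilon>"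
    using LIMSEQ_D[OF lim \<epsilon>] by blast
  then show False
    using far[OF x(2) x(1), of "r N"] by (auto simp: norm_minus_commute)
qed

section \<open>Finite-dimensional spaces\<close>

lemma abs_scaled_infdist_subspace_le:
  fixes b :: "'a::real_normed_vector"
  assumes S: "subspace S" and v: "v \<in> S"
  shows "\<bar>k\<bar> * infdist b S \<le> norm (k *\<^sub>R b + v)"
proof (cases "k = 0")
  case True
  then show ?thesis by simp
next
  case False
  have "infdist b S \<le> dist b ((- 1 / k) *\<^sub>R v)"
    using S v by (intro infdist_le) (simp add: subspace_neg subspace_scale)
  also have "\<dots> = norm ((1 / k) *\<^sub>R (k *\<^sub>R b + v))"
    using False by (simp add: dist_norm scaleR_add_right)
  also have "\<dots> = norm (k *\<^sub>R b + v) / \<bar>k\<bar>"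
    by simp
  finally show ?thesis using False by (simp add: field_simps)
qed

lemma span_insert_bounded_seq_decompose:
  fixes b :: "'a::real_normed_vector" and ys :: "nat \<Rightarrow> 'a"
  assumes closed: "closed (span B)" and b: "b \<notin> span B"
    and ys: "\<And>n. ys n \<in> span (insert b B)" and bounded: "bounded (range ys)"
  obtains k :: "nat \<Rightarrow> real" and v :: "nat \<Rightarrow> 'a" where "bounded (range k)" "bounded (range v)" "\<And>n. v n \<in> span B"
    "\<And>n. ys n = k n *\<^sub>R b + v n"
proof -
  define \<delta> where "\<delta> = infdist b (span B)"
  have \<delta>: "\<delta> > 0"
    using closed b in_closed_iff_infdist_zero[OF closed, of b] infdist_nonneg[of b "span B"]
    unfolding \<delta>_def by (metis span_zero empty_iff order_neq_le_trans)
  have "\<forall>n. \<exists>c. ys n - c *\<^sub>R b \<in> span B"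
    using ys span_insert[of b B] by blast
  then obtain k where v: "\<And>n. ys n - k n *\<^sub>R b \<in> span B"
    by metis
  obtain C where C: "\<And>n. norm (ys n) \<le> C"
    using bounded unfolding bounded_iff by blast
  have k: "\<bar>k n\<bar> \<le> C / \<delta>" for n
    using abs_scaled_infdist_subspace_le[OF subspace_span v[of n], of "k n" b] C[of n] \<delta>
    by (simp add: \<delta>_def field_simps)
  have "norm (ys n - k n *\<^sub>R b) \<le> C + C / \<delta> * norm b" for n
    using norm_triangle_ineq4[of "ys n" "k n *\<^sub>R b"] C[of n] mult_right_mono[OF k[of n] norm_ge_zero[of b]]
    by simp
  then have "bounded (range (\<lambda>n. ys n - k n *\<^sub>R b))"
    unfolding bounded_iff by blast
  moreover have "bounded (range k)"
    using k unfolding bounded_iff by (auto simp: real_norm_def)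
  ultimately show ?thesis
    using that[of k "\<lambda>n. ys n - k n *\<^sub>R b"] v by simp
qed

lemma closed_if_bounded_seq_convergent_subseq:
  fixes S :: "'a::real_normed_vector set"
  assumes "\<And>u. (\<And>n. u n \<in> S) \<Longrightarrow> bounded (range u) \<Longrightarrow>
    \<exists>l\<in>S. \<exists>r :: nat \<Rightarrow> nat. strict_mono r \<and> (u \<circ> r) \<longlonglongrightarrow> l"
  shows "closed S"
  unfolding closed_sequential_limits
proof (intro allI impI, elim conjE)
  fix u l assume u: "\<forall>n. u n \<in> S" "u \<longlonglongrightarrow> l"
  then obtain l' and r :: "nat \<Rightarrow> nat" where "l' \<in> S" "strict_mono r" "(u \<circ> r) \<longlonglongrightarrow> l'"
    using assms[of u] convergent_imp_bounded by blast
  then show "l \<in> S"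
    using LIMSEQ_subseq_LIMSEQ[OF u(2)] LIMSEQ_unique by metis
qed

lemma bounded_seq_in_finite_span_convergent_subseq:
  fixes B :: "'a::real_normed_vector set"
  assumes "finite B" and "\<And>n. ys n \<in> span B" and "bounded (range ys)"
  shows "\<exists>l\<in>span B. \<exists>r :: nat \<Rightarrow> nat. strict_mono r \<and> (ys \<circ> r) \<longlonglongrightarrow> l"
  using assms
proof (induction B arbitrary: ys rule: finite_induct)
  case empty
  then have "ys = (\<lambda>n. 0)" by auto
  then show ?case by (auto intro: exI[of _ id] simp: strict_mono_def)
next
  case (insert b B)
  have closed: "closed (span B)"
    by (rule closed_if_bounded_seq_convergent_subseq) (rule insert.IH)
  show ?case
  proof (cases "b \<in> span B")
    case True
    then show ?thesis using insert.IH insert.prems by (simp add: span_redundant)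
  next
    case False
    obtain k v where k: "bounded (range k)" and v: "bounded (range v)" "\<And>n. v n \<in> span B"
      and ys: "\<And>n. ys n = k n *\<^sub>R b + v n"
      using span_insert_bounded_seq_decompose[OF closed False insert.prems] by blast
    obtain \<kappa> and r1 :: "nat \<Rightarrow> nat" where r1: "strict_mono r1" "(k \<circ> r1) \<longlonglongrightarrow> \<kappa>"
      using bounded_imp_convergent_subsequence[OF k] by blast
    have "bounded (range (v \<circ> r1))"
      using v(1) by (rule bounded_subset) auto
    moreover have "(v \<circ> r1) n \<in> span B" for n
      using v(2) by simp
    ultimately obtain w and r2 :: "nat \<Rightarrow> nat" where w: "w \<in> span B" and r2: "strict_mono r2"
      and vw: "(v \<circ> r1 \<circ> r2) \<longlonglongrightarrow> w"
      using insert.IH[of "v \<circ> r1"] by blast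
    have "(\<lambda>n. (k \<circ> r1 \<circ> r2) n *\<^sub>R b + (v \<circ> r1 \<circ> r2) n) \<longlonglongrightarrow> \<kappa> *\<^sub>R b + w"
      by (intro tendsto_intros LIMSEQ_subseq_LIMSEQ[OF r1(2) r2] vw)
    then have "(ys \<circ> (r1 \<circ> r2)) \<longlonglongrightarrow> \<kappa> *\<^sub>R b + w"
      by (simp add: ys comp_def)
    moreover have "\<kappa> *\<^sub>R b + w \<in> span (insert b B)"
      using w by (meson span_add span_base span_mono span_scale insertI1 subset_insertI subsetD)
    ultimately show ?thesis
      using strict_mono_o[OF r1(1) r2] by blast
  qed
qed

lemma finite_dim_compact:
  fixes K :: "'a::real_normed_vector set"
  assumes "finite_dim_space TYPE('a)" and "bounded K" and "closed K"
  shows "compact K"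
  unfolding compact_eq_seq_compact_metric seq_compact_def
proof (intro allI impI)
  fix f :: "nat \<Rightarrow> 'a" assume f: "\<forall>n. f n \<in> K"
  obtain B :: "'a set" where "finite B" "span B = UNIV"
    using assms(1) unfolding finite_dim_space_def by blast
  moreover have "bounded (range f)"
    using f assms(2) by (auto intro: bounded_subset)
  ultimately obtain l and r :: "nat \<Rightarrow> nat" where "strict_mono r" "(f \<circ> r) \<longlonglongrightarrow> l"
    using bounded_seq_in_finite_span_convergent_subseq[of B f] by auto
  moreover have "l \<in> K"
    using closed_sequentially[OF assms(3) _ \<open>(f \<circ> r) \<longlonglongrightarrow> l\<close>] f by simp
  ultimately show "\<exists>l\<in>K. \<exists>r :: nat \<Rightarrow> nat. strict_mono r \<and> (f \<circ> r) \<longlonglongrightarrow> l"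
    by blast
qed

lemma compact_operator_finite_dim_codomain:
  fixes T :: "'a::real_normed_vector \<Rightarrow>\<^sub>L 'b::real_normed_vector"
  assumes "finite_dim_space TYPE('b)"
  shows "compact_operator T"
  unfolding compact_operator_def
  using assms by (intro finite_dim_compact bounded_closure bounded_linear_image bounded_cball
      blinfun.bounded_linear_right closed_closure)

theorem theorem2p5:
  assumes "reflexive_space TYPE('a::banach)" and "kadets_klee TYPE('a)"
    and "dim_gt_one TYPE('a)" and "dim_gt_one TYPE('b::banach)"
  shows "(\<forall>(T :: 'a \<Rightarrow>\<^sub>L 'b) \<epsilon>. compact_operator T \<and> norm T = 1 \<and> \<epsilon> > 0
             \<longrightarrow> uniform_BPB_approx T T \<epsilon>)
       \<and> (finite_dim_space TYPE('a) \<and> finite_dim_space TYPE('b) \<longrightarrow>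
          (\<forall>(T :: 'a \<Rightarrow>\<^sub>L 'b) \<epsilon>. norm T = 1 \<and> \<epsilon> > 0 \<longrightarrow> (\<exists>A. uniform_BPB_approx A T \<epsilon>)))"
  using compact_operator_uniform_BPB_approx_self[OF assms(1,2)] compact_operator_finite_dim_codomain
  by blast

end
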